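(* For every $r_0\in(0,1)$ there exists $\gamma>0$ such that for all $\delta\in(0,1/10)$ and all $0<\alpha<r\le1$, and all $z$ with $$|z|\le\gamma\,\delta\, r\,\frac{\log(e/r)}{\log(e/\alpha)},$$ one has $d_{B(0,r_0)\setminus\{r\}}(0,z)\le\frac{\delta}{2\log(e/\alpha)}$.
   Context: $d_W$ denotes the hyperbolic distance in a hyperbolic domain $W$, normalized to have curvature $-1$ (on $\mathbb D$ the density is $2|dz|/(1-|z|^2)$). $B(0,r_0)$ is the open disk of radius $r_0$ centered at $0$ (if $r\ge r_0$, $B(0,r_0)\setminus\{r\}=B(0,r_0)$). *)

theory Defs
  imports "HOL-Complex_Analysis.Complex_Analysis"
begin

text \<open>Hyperbolic distance on the unit disk, curvature -1 (density 2|dz|/(1-|z|^2)):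
  d(a,b) = 2 artanh (|a - b| / |1 - conj a * b|).\<close>
definition disk_hyp_dist :: "complex \<Rightarrow> complex \<Rightarrow> real" where
  "disk_hyp_dist a b = 2 * artanh (cmod (a - b) / cmod (1 - cnj a * b))"

definition hyp_dist :: "complex set \<Rightarrow> complex \<Rightarrow> complex \<Rightarrow> real" where
  "hyp_dist W z w = Inf {disk_hyp_dist a b | a b p.
      p holomorphic_on ball 0 1 \<and> covering_space (ball 0 1) p W \<and>
      a \<in> ball 0 1 \<and> b \<in> ball 0 1 \<and> p a = z \<and> p b = w}"

end

theory Submission
  imports Defs
begin

text \<open>
  The hyperbolic distance is bounded above by the disk distance between any two lifts under a
  holomorphic universal covering, so it suffices to write down coverings and lifts explicitly.

  If r \<ge> r0 the domain is the disk B(0, r0) itself, and the scaling w \<mapsto> r0 w gives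
  d(0, z) \<le> 4 |z| / r0 for small z.

  If r < r0, put c = r / r0. The disk involution u \<mapsto> (c - u) / (1 - c u) exchanges 0 and c,
  so w \<mapsto> r0 (c - exp w) / (1 - c exp w) covers B(0, r0) - {r} by the left half-plane,
  which the Cayley map identifies with the unit disk. The point 0 lifts to ln c and z lifts to
  ln c + Ln q, where q is close to 1 with |q - 1| \<le> 2 (|z| / r) (1 - c^2). Two points t and t + \<mu>
  with t < 0 are at half-plane distance about |\<mu>| / |t|, and here |t| = ln (r0 / r), so
  d(0, z) \<lesssim> (|z| / r) (1 - c^2) / ln (r0 / r).

  In both cases d(0, z) \<le> C(r0) |z| / (r log (e / r)), which gives the statement.
\<close>

lemma artanh_nonneg:
  fixes x :: real
  assumes "0 \<le> x" "x < 1"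
  shows "0 \<le> artanh x"
  using assms by (simp add: artanh_def le_divide_eq)

lemma artanh_le_two_mult:
  fixes x :: real
  assumes "0 \<le> x" "x \<le> 1/2"
  shows "artanh x \<le> 2 * x"
proof -
  have "ln ((1 + x) / (1 - x)) \<le> (1 + x) / (1 - x) - 1"
    using assms by (intro ln_le_minus_one) simp
  also have "\<dots> = 2 * x / (1 - x)"
    using assms by (simp add: field_simps)
  also have "\<dots> \<le> 4 * x"
    using assms by (simp add: divide_le_eq algebra_simps mult_left_mono)
  finally show ?thesis unfolding artanh_def by simp
qed

lemma one_minus_square_le_minus_two_ln:
  fixes c :: real
  assumes "0 < c"
  shows "1 - c\<^sup>2 \<le> - 2 * ln c"
proof -
  have "1 - c\<^sup>2 \<le> 2 * (1 - c)"
    using zero_le_power2[of "1 - c"] by (simp add: power2_eq_square algebra_simps)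
  moreover have "ln c \<le> c - 1" using assms by (rule ln_le_minus_one)
  ultimately show ?thesis by simp
qed

lemma ln_exp1_div_ge_1:
  fixes r :: real
  assumes "0 < r" "r \<le> 1"
  shows "1 \<le> ln (exp 1 / r)"
  using assms by (simp add: ln_div)

lemma mult_ln_exp1_div_pos:
  fixes r :: real
  assumes "0 < r" "r \<le> 1"
  shows "0 < r * ln (exp 1 / r)"
proof -
  have "0 < ln (exp 1 / r)" using ln_exp1_div_ge_1[OF assms] by linarith
  with assms(1) show ?thesis by (rule mult_pos_pos)
qed

lemma mult_ln_exp1_div_le_1:
  fixes r :: real
  assumes "0 < r"
  shows "r * ln (exp 1 / r) \<le> 1"
proof -
  have "ln (1 / r) \<le> 1 / r - 1" using assms by (intro ln_le_minus_one) simp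
  then have "r * (1 - ln r) \<le> r * (1 / r)"
    using assms by (intro mult_left_mono) (auto simp: ln_div)
  then show ?thesis using assms by (simp add: ln_div)
qed

lemma one_minus_square_div_ln_le:
  fixes r r0 :: real
  assumes "0 < r" "r < r0" "r0 \<le> 1"
  shows "(1 - (r / r0)\<^sup>2) / ln (r0 / r) \<le> (3 - 2 * ln r0) / ln (exp 1 / r)"
proof -
  define l where "l = ln (r0 / r)"
  define Lr where "Lr = ln (exp 1 / r)"
  have l: "0 < l" using assms by (simp add: l_def)
  have Lr: "Lr = (1 - ln r0) + l" using assms by (simp add: l_def Lr_def ln_div)
  have "ln r0 \<le> 0" using assms by simp
  with Lr l have Lr_pos: "0 < Lr" by linarith
  have "1 - (r / r0)\<^sup>2 \<le> - 2 * ln (r / r0)"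
    using assms by (intro one_minus_square_le_minus_two_ln) simp
  then have c2: "1 - (r / r0)\<^sup>2 \<le> 2 * l" using assms by (simp add: l_def ln_div)
  have "(1 - ln r0) * (1 - (r / r0)\<^sup>2) \<le> (1 - ln r0) * (2 * l)"
    using c2 \<open>ln r0 \<le> 0\<close> by (intro mult_left_mono) auto
  moreover have "l * (1 - (r / r0)\<^sup>2) \<le> l * 1"
    using l assms by (intro mult_left_mono) auto
  ultimately have "Lr * (1 - (r / r0)\<^sup>2) \<le> (3 - 2 * ln r0) * l"
    unfolding Lr by (simp add: algebra_simps)
  then show ?thesis
    using l Lr_pos by (simp add: divide_le_eq le_divide_eq mult.commute flip: l_def Lr_def)
qed

section \<open>Covering spaces\<close>

lemma covering_space_restrict:
  assumes cov: "covering_space C p S" and T: "openin (top_of_set S) T"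
  shows "covering_space (C \<inter> p -` T) p T"
proof
  show "continuous_on (C \<inter> p -` T) p"
    using cov covering_space_imp_continuous continuous_on_subset by blast
  have TS: "T \<subseteq> S" using T openin_subset by fastforce
  then show "p ` (C \<inter> p -` T) = T"
    using cov covering_space_imp_surjective by blast
  fix x assume "x \<in> T"
  with TS have "x \<in> S" by blast
  then obtain U v where xU: "x \<in> U" and U: "openin (top_of_set S) U"
    and v: "\<Union>v = C \<inter> p -` U" "\<forall>u\<in>v. openin (top_of_set C) u" "pairwise disjnt v"
       "\<forall>u\<in>v. \<exists>q. homeomorphism u U p q"
    using cov unfolding covering_space_def by metis
  show "\<exists>U'. x \<in> U' \<and> openin (top_of_set T) U' \<and>
          (\<exists>v'. \<Union>v' = (C \<inter> p -` T) \<inter> p -` U' \<and> (\<forall>u\<in>v'. openin (top_of_set (C \<inter> p -` T)) u) \<and>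
           pairwise disjnt v' \<and> (\<forall>u\<in>v'. \<exists>q. homeomorphism u U' p q))"
  proof (intro exI[where x="U \<inter> T"] exI[where x="(\<lambda>u. u \<inter> p -` T) ` v"] conjI ballI)
    show "x \<in> U \<inter> T" using xU \<open>x \<in> T\<close> by blast
    obtain G where "open G" "U = S \<inter> G" using U openin_open by blast
    with TS show "openin (top_of_set T) (U \<inter> T)"
      by (metis Int_absorb1 inf_assoc inf_commute openin_open_Int)
    show "\<Union>((\<lambda>u. u \<inter> p -` T) ` v) = (C \<inter> p -` T) \<inter> p -` (U \<inter> T)"
      using v(1) by blast
    show "pairwise disjnt ((\<lambda>u. u \<inter> p -` T) ` v)"
      using v(3) unfolding pairwise_def disjnt_def by blast
  next
    fix u' assume "u' \<in> (\<lambda>u. u \<inter> p -` T) ` v"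
    then obtain u where u: "u \<in> v" "u' = u \<inter> p -` T" by blast
    obtain G where "open G" "u = C \<inter> G" using v(2) u openin_open by blast
    then have "u' = (C \<inter> p -` T) \<inter> G" using u by blast
    with \<open>open G\<close> show "openin (top_of_set (C \<inter> p -` T)) u'" by (simp add: openin_open_Int)
    obtain q where q: "homeomorphism u U p q" using v(4) u by blast
    have "p ` u' = U \<inter> T"
      using homeomorphism_image1[OF q] u by blast
    then show "\<exists>q. homeomorphism u' (U \<inter> T) p q"
      using homeomorphism_of_subsets[OF q, of u' "U \<inter> T"] u by blast
  qed
qed

lemma covering_space_compose_homeomorphism:
  assumes cov: "covering_space C p S" and h: "homeomorphism C' C h h'"
  shows "covering_space C' (p \<circ> h) S"
proof
  have hC: "h ` C' = C" and hcont: "continuous_on C' h"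
    using h by (simp_all add: homeomorphism_def)
  show "continuous_on C' (p \<circ> h)"
    by (rule continuous_on_compose[OF hcont]) (simp add: hC covering_space_imp_continuous[OF cov])
  show "(p \<circ> h) ` C' = S"
    using cov covering_space_imp_surjective hC by (metis image_comp)
  fix x assume "x \<in> S"
  then obtain U v where xU: "x \<in> U" and U: "openin (top_of_set S) U"
    and v: "\<Union>v = C \<inter> p -` U" "\<forall>u\<in>v. openin (top_of_set C) u" "pairwise disjnt v"
       "\<forall>u\<in>v. \<exists>q. homeomorphism u U p q"
    using cov unfolding covering_space_def by metis
  show "\<exists>U'. x \<in> U' \<and> openin (top_of_set S) U' \<and>
          (\<exists>v'. \<Union>v' = C' \<inter> (p \<circ> h) -` U' \<and> (\<forall>u\<in>v'. openin (top_of_set C') u) \<and>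
           pairwise disjnt v' \<and> (\<forall>u\<in>v'. \<exists>q. homeomorphism u U' (p \<circ> h) q))"
  proof (intro exI[where x=U] exI[where x="(\<lambda>u. C' \<inter> h -` u) ` v"] conjI ballI)
    show "x \<in> U" "openin (top_of_set S) U" by fact+
    have "C' \<inter> (p \<circ> h) -` U = C' \<inter> h -` \<Union>v" using v(1) hC by auto
    then show "\<Union>((\<lambda>u. C' \<inter> h -` u) ` v) = C' \<inter> (p \<circ> h) -` U" by auto
    show "pairwise disjnt ((\<lambda>u. C' \<inter> h -` u) ` v)"
      using v(3) unfolding pairwise_def disjnt_def by blast
  next
    fix u' assume "u' \<in> (\<lambda>u. C' \<inter> h -` u) ` v"
    then obtain u where u: "u \<in> v" "u' = C' \<inter> h -` u" by blast
    show "openin (top_of_set C') u'"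
      using hcont hC v(2) u unfolding continuous_on_open by blast
    have uC: "u \<subseteq> C" using v(1) u by blast
    then have "h ` u' = u" using u hC by blast
    then have "homeomorphism u' u h h'"
      using homeomorphism_of_subsets[OF h, of u' u] u uC by blast
    moreover obtain q where "homeomorphism u U p q" using v(4) u by blast
    ultimately show "\<exists>q. homeomorphism u' U (p \<circ> h) q"
      using homeomorphism_compose by blast
  qed
qed

lemma homeomorphism_compose_covering_space:
  assumes cov: "covering_space C p S" and k: "homeomorphism S S' k k'"
  shows "covering_space C (k \<circ> p) S'"
proof
  have pC: "p ` C = S" using cov covering_space_imp_surjective by blast
  show "continuous_on C (k \<circ> p)"
    by (rule continuous_on_compose)
      (use cov k pC in \<open>auto simp: homeomorphism_def covering_space_imp_continuous\<close>)
  show "(k \<circ> p) ` C = S'"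
    using pC k homeomorphism_image1 by (metis image_comp)
  fix y assume "y \<in> S'"
  then have y: "k' y \<in> S" "k (k' y) = y" using k unfolding homeomorphism_def by auto
  then obtain U v where xU: "k' y \<in> U" and U: "openin (top_of_set S) U"
    and v: "\<Union>v = C \<inter> p -` U" "\<forall>u\<in>v. openin (top_of_set C) u" "pairwise disjnt v"
       "\<forall>u\<in>v. \<exists>q. homeomorphism u U p q"
    using cov unfolding covering_space_def by metis
  have US: "U \<subseteq> S" using U openin_subset by fastforce
  have kk: "\<And>x. x \<in> S \<Longrightarrow> k' (k x) = x" using k unfolding homeomorphism_def by blast
  show "\<exists>U'. y \<in> U' \<and> openin (top_of_set S') U' \<and>
          (\<exists>v'. \<Union>v' = C \<inter> (k \<circ> p) -` U' \<and> (\<forall>u\<in>v'. openin (top_of_set C) u) \<and>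
           pairwise disjnt v' \<and> (\<forall>u\<in>v'. \<exists>q. homeomorphism u U' (k \<circ> p) q))"
  proof (intro exI[where x="k ` U"] exI[where x=v] conjI ballI)
    show "y \<in> k ` U" using y xU by force
    show "openin (top_of_set S') (k ` U)" using homeomorphism_imp_open_map[OF k U] .
    have "C \<inter> (k \<circ> p) -` (k ` U) = C \<inter> p -` U"
    proof (intro set_eqI iffI)
      fix x assume "x \<in> C \<inter> (k \<circ> p) -` (k ` U)"
      then obtain w where "x \<in> C" "w \<in> U" "k (p x) = k w" by auto
      moreover have "p x \<in> S" using \<open>x \<in> C\<close> pC by blast
      ultimately show "x \<in> C \<inter> p -` U" using kk US by (metis IntI subsetD vimageI)
    qed auto
    then show "\<Union>v = C \<inter> (k \<circ> p) -` (k ` U)" using v(1) by simp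
    show "pairwise disjnt v" by (rule v(3))
  next
    fix u assume u: "u \<in> v"
    show "openin (top_of_set C) u" using v(2) u by blast
    obtain q where "homeomorphism u U p q" using v(4) u by blast
    moreover have "homeomorphism U (k ` U) k k'"
      using homeomorphism_of_subsets[OF k US] k US unfolding homeomorphism_def by blast
    ultimately show "\<exists>q. homeomorphism u (k ` U) (k \<circ> p) q"
      using homeomorphism_compose by blast
  qed
qed

section \<open>A real disk involution and the Cayley map\<close>

definition disk_flip :: "real \<Rightarrow> complex \<Rightarrow> complex" where
  "disk_flip c u = (of_real c - u) / (1 - of_real c * u)"

lemma disk_flip_eq_Moebius_function: "disk_flip c u = - Moebius_function 0 (of_real c) u"
  by (simp add: disk_flip_def Moebius_function_simple minus_divide_left)

lemma disk_flip_self [simp]: "disk_flip c (of_real c) = 0"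
  by (simp add: disk_flip_def)

lemma norm_disk_flip_less_1: "\<bar>c\<bar> < 1 \<Longrightarrow> norm u < 1 \<Longrightarrow> norm (disk_flip c u) < 1"
  by (simp add: disk_flip_eq_Moebius_function Moebius_function_norm_lt_1)

lemma holomorphic_on_disk_flip: "\<bar>c\<bar> < 1 \<Longrightarrow> disk_flip c holomorphic_on ball 0 1"
  using Moebius_function_holomorphic[of "of_real c" 0]
  by (simp add: disk_flip_eq_Moebius_function[abs_def] holomorphic_on_minus)

lemma disk_flip_denominator_nonzero:
  fixes u :: complex
  assumes "\<bar>c\<bar> < 1" "norm u < 1"
  shows "1 - of_real c * u \<noteq> 0"
proof
  assume "1 - of_real c * u = 0"
  then have "norm (of_real c * u) = 1" by simp
  moreover have "norm (of_real c * u) < 1 * 1"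
    using assms by (intro norm_mult_less) simp_all
  ultimately show False by simp
qed

lemma disk_flip_disk_flip:
  assumes "\<bar>c\<bar> < 1" "norm u < 1"
  shows "disk_flip c (disk_flip c u) = u"
proof -
  have den: "1 - of_real c * u \<noteq> 0" using disk_flip_denominator_nonzero[OF assms] .
  have "c\<^sup>2 \<noteq> 1" using assms(1) by (simp add: abs_square_eq_1)
  then have c2: "1 - (of_real c)\<^sup>2 \<noteq> (0::complex)"
    by (metis eq_iff_diff_eq_0 of_real_eq_1_iff of_real_power)
  have num: "of_real c - disk_flip c u = u * (1 - (of_real c)\<^sup>2) / (1 - of_real c * u)"
    and denom: "1 - of_real c * disk_flip c u = (1 - (of_real c)\<^sup>2) / (1 - of_real c * u)"
    using den by (simp_all add: disk_flip_def field_simps power2_eq_square)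
  show ?thesis
    unfolding disk_flip_def[of c "disk_flip c u"] num denom using den c2 by simp
qed

lemma disk_flip_eq_0_iff: "\<bar>c\<bar> < 1 \<Longrightarrow> norm u < 1 \<Longrightarrow> disk_flip c u = 0 \<longleftrightarrow> u = of_real c"
  using disk_flip_denominator_nonzero by (auto simp: disk_flip_def)

lemma homeomorphism_disk_flip:
  assumes c: "\<bar>c\<bar> < 1"
  shows "homeomorphism (ball 0 1 - {0}) (ball 0 1 - {of_real c}) (disk_flip c) (disk_flip c)"
proof (rule homeomorphismI)
  have cont: "continuous_on (ball 0 1) (disk_flip c)"
    using holomorphic_on_imp_continuous_on holomorphic_on_disk_flip[OF c] by blast
  show "continuous_on (ball 0 1 - {0}) (disk_flip c)"
    by (rule continuous_on_subset[OF cont]) blast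
  show "continuous_on (ball 0 1 - {of_real c}) (disk_flip c)"
    by (rule continuous_on_subset[OF cont]) blast
  show "disk_flip c ` (ball 0 1 - {0}) \<subseteq> ball 0 1 - {of_real c}"
  proof (rule image_subsetI)
    fix v :: complex assume v: "v \<in> ball 0 1 - {0}"
    then have "disk_flip c v \<noteq> of_real c" using disk_flip_disk_flip[OF c, of v] by force
    with v show "disk_flip c v \<in> ball 0 1 - {of_real c}" using norm_disk_flip_less_1[OF c, of v] by simp
  qed
  show "disk_flip c ` (ball 0 1 - {of_real c}) \<subseteq> ball 0 1 - {0}"
    using c norm_disk_flip_less_1 disk_flip_eq_0_iff by auto
qed (use c disk_flip_disk_flip in auto)

lemma homeomorphism_scale_punctured_ball:
  fixes R :: real and a :: complex
  assumes "0 < R"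
  shows "homeomorphism (ball 0 1 - {a}) (ball 0 R - {of_real R * a})
           (\<lambda>v. of_real R * v) (\<lambda>w. w / of_real R)"
proof (rule homeomorphismI)
  show "continuous_on (ball 0 1 - {a}) (\<lambda>v. of_real R * v)"
    by (intro continuous_intros)
  show "continuous_on (ball 0 R - {of_real R * a}) (\<lambda>w. w / of_real R)"
    using assms by (intro continuous_intros) auto
qed (use assms in \<open>auto simp: norm_mult norm_divide divide_less_eq\<close>)

definition cayley :: "complex \<Rightarrow> complex" where
  "cayley w = (w + 1) / (w - 1)"

lemma Re_cayley_less_0:
  assumes "norm w < 1"
  shows "Re (cayley w) < 0"
proof -
  have "(Re w)\<^sup>2 + (Im w)\<^sup>2 < 1"
    using assms by (simp add: cmod_def)
  moreover have "w \<noteq> 1" using assms by auto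
  then have "0 < (Re w - 1)\<^sup>2 + (Im w)\<^sup>2"
    by (metis complex_eq_iff one_complex.simps right_minus_eq sum_power2_gt_zero_iff)
  ultimately show ?thesis
    by (simp add: cayley_def Re_divide divide_neg_pos power2_eq_square algebra_simps)
qed

lemma norm_cayley_less_1:
  assumes "Re w < 0"
  shows "norm (cayley w) < 1"
proof -
  have "(Re w + 1)\<^sup>2 + (Im w)\<^sup>2 < (Re w - 1)\<^sup>2 + (Im w)\<^sup>2"
    using assms by (simp add: power2_eq_square algebra_simps)
  then have "norm (w + 1) < norm (w - 1)"
    by (simp add: cmod_def)
  moreover have "w \<noteq> 1" using assms by auto
  ultimately show ?thesis by (simp add: cayley_def norm_divide divide_less_eq)
qed

lemma cayley_cayley: "w \<noteq> 1 \<Longrightarrow> cayley (cayley w) = w"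
  unfolding cayley_def by (simp add: field_simps)

lemma holomorphic_on_cayley: "cayley holomorphic_on ball 0 1"
  unfolding cayley_def by (intro holomorphic_intros) auto

lemma homeomorphism_cayley: "homeomorphism (ball 0 1) {w. Re w < 0} cayley cayley"
proof (rule homeomorphismI)
  show "continuous_on (ball 0 1) cayley" "continuous_on {w. Re w < 0} cayley"
    unfolding cayley_def by (intro continuous_intros; force)+
  show "cayley ` ball 0 1 \<subseteq> {w. Re w < 0}" using Re_cayley_less_0 by auto
  show "cayley ` {w. Re w < 0} \<subseteq> ball 0 1" using norm_cayley_less_1 by auto
  show "cayley (cayley w) = w" if "w \<in> ball 0 1" for w
    using that by (intro cayley_cayley) auto
  show "cayley (cayley w) = w" if "w \<in> {w. Re w < 0}" for w
    using that by (intro cayley_cayley) auto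
qed

lemma disk_hyp_dist_cayley:
  assumes "Re w1 < 0" "Re w2 < 0"
  shows "disk_hyp_dist (cayley w1) (cayley w2) = 2 * artanh (norm (w1 - w2) / norm (cnj w1 + w2))"
proof -
  have nz: "w1 - 1 \<noteq> 0" "w2 - 1 \<noteq> 0" "cnj w1 - 1 \<noteq> 0" "cnj w1 + w2 \<noteq> 0"
    using assms by (auto simp: complex_eq_iff)
  have E1: "cayley w1 - cayley w2 = 2 * (w2 - w1) / ((w1 - 1) * (w2 - 1))"
    using nz by (simp add: cayley_def field_simps)
  have E2: "1 - cnj (cayley w1) * cayley w2 = - 2 * (cnj w1 + w2) / ((cnj w1 - 1) * (w2 - 1))"
  proof -
    have "1 - cnj (cayley w1) * cayley w2 = 1 - (cnj w1 + 1) * (w2 + 1) / ((cnj w1 - 1) * (w2 - 1))"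
      by (simp add: cayley_def)
    also have "\<dots> = ((cnj w1 - 1) * (w2 - 1) - (cnj w1 + 1) * (w2 + 1)) / ((cnj w1 - 1) * (w2 - 1))"
      using nz by (simp add: diff_divide_distrib)
    also have "(cnj w1 - 1) * (w2 - 1) - (cnj w1 + 1) * (w2 + 1) = - 2 * (cnj w1 + w2)"
      by (simp add: algebra_simps)
    finally show ?thesis .
  qed
  have nc: "norm (cnj w1 - 1) = norm (w1 - 1)"
    by (metis complex_cnj_diff complex_cnj_one complex_mod_cnj)
  have "norm (cayley w1 - cayley w2) / norm (1 - cnj (cayley w1) * cayley w2)
      = (2 * norm (w2 - w1) / (norm (w1 - 1) * norm (w2 - 1)))
        / (2 * norm (cnj w1 + w2) / (norm (w1 - 1) * norm (w2 - 1)))"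
    unfolding E1 E2 norm_divide norm_mult nc by simp
  also have "\<dots> = norm (w1 - w2) / norm (cnj w1 + w2)"
    using nz by (simp add: norm_minus_commute)
  finally show ?thesis by (simp add: disk_hyp_dist_def)
qed

section \<open>A universal covering of the punctured disk\<close>

lemma covering_space_exp_left_half_plane:
  "covering_space {w. Re w < 0} exp (ball 0 1 - {0})"
proof -
  have "openin (top_of_set (- {0})) (ball (0::complex) 1 - {0})"
    by (intro open_openin_trans) auto
  from covering_space_restrict[OF covering_space_exp_punctured_plane this]
  show ?thesis by (simp add: vimage_def)
qed

definition punctured_ball_covering :: "real \<Rightarrow> real \<Rightarrow> complex \<Rightarrow> complex" where
  "punctured_ball_covering R r w = of_real R * disk_flip (r / R) (exp (cayley w))"

lemma covering_space_punctured_ball_covering: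
  assumes "0 < r" "r < R"
  shows "covering_space (ball 0 1) (punctured_ball_covering R r) (ball 0 R - {of_real r})"
proof -
  have c: "\<bar>r / R\<bar> < 1" using assms by simp
  have "covering_space (ball 0 1) (exp \<circ> cayley) (ball 0 1 - {0})"
    by (rule covering_space_compose_homeomorphism[OF covering_space_exp_left_half_plane homeomorphism_cayley])
  moreover have "homeomorphism (ball 0 1 - {0}) (ball 0 R - {of_real r})
      ((\<lambda>v. of_real R * v) \<circ> disk_flip (r / R)) (disk_flip (r / R) \<circ> (\<lambda>w. w / of_real R))"
    using homeomorphism_compose[OF homeomorphism_disk_flip[OF c]
        homeomorphism_scale_punctured_ball[of R "of_real (r / R)"]] assms
    by simp
  ultimately show ?thesis
    using homeomorphism_compose_covering_space
    by (fastforce simp: punctured_ball_covering_def[abs_def] o_def)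
qed

lemma holomorphic_on_punctured_ball_covering:
  assumes "0 < r" "r < R"
  shows "punctured_ball_covering R r holomorphic_on ball 0 1"
proof -
  have "(exp \<circ> cayley) holomorphic_on ball 0 1"
    by (intro holomorphic_on_compose holomorphic_on_cayley holomorphic_intros)
  moreover have "disk_flip (r / R) holomorphic_on ball 0 1"
    using assms by (intro holomorphic_on_disk_flip) simp
  moreover have "(exp \<circ> cayley) ` ball 0 1 \<subseteq> ball 0 1"
    using Re_cayley_less_0 by auto
  ultimately have "(disk_flip (r / R) \<circ> (exp \<circ> cayley)) holomorphic_on ball 0 1"
    by (rule holomorphic_on_compose_gen)
  then show ?thesis
    unfolding punctured_ball_covering_def by (intro holomorphic_intros) (simp add: o_def)
qed

lemma punctured_ball_covering_cayley:
  "w \<noteq> 1 \<Longrightarrow> punctured_ball_covering R r (cayley w) = of_real R * disk_flip (r / R) (exp w)"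
  by (simp add: punctured_ball_covering_def cayley_cayley)

section \<open>Distance estimates\<close>

lemma norm_diff_less_norm_one_minus_cnj_mult:
  fixes a b :: complex
  assumes "norm a < 1" "norm b < 1"
  shows "norm (a - b) < norm (1 - cnj a * b)"
proof -
  have "(norm (1 - cnj a * b))\<^sup>2 - (norm (a - b))\<^sup>2 = (1 - (norm a)\<^sup>2) * (1 - (norm b)\<^sup>2)"
    unfolding cmod_power2 by (simp add: algebra_simps power2_eq_square)
  moreover have "0 < (1 - (norm a)\<^sup>2) * (1 - (norm b)\<^sup>2)"
    using assms by (simp add: abs_square_less_1)
  ultimately have "(norm (a - b))\<^sup>2 < (norm (1 - cnj a * b))\<^sup>2" by linarith
  then show ?thesis by (simp add: power_less_imp_less_base)
qed

lemma disk_hyp_dist_nonneg: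
  assumes "norm a < 1" "norm b < 1"
  shows "0 \<le> disk_hyp_dist a b"
  using norm_diff_less_norm_one_minus_cnj_mult[OF assms]
  by (simp add: disk_hyp_dist_def artanh_nonneg divide_less_eq)

lemma hyp_dist_le_disk_hyp_dist:
  assumes "p holomorphic_on ball 0 1" "covering_space (ball 0 1) p W"
    and "a \<in> ball 0 1" "b \<in> ball 0 1"
  shows "hyp_dist W (p a) (p b) \<le> disk_hyp_dist a b"
  unfolding hyp_dist_def
  by (rule cInf_lower) (use assms in \<open>blast, fastforce intro!: bdd_belowI[of _ 0] disk_hyp_dist_nonneg\<close>)

lemma hyp_dist_ball_0_le:
  fixes R :: real and z :: complex
  assumes "0 < R" "norm z \<le> R / 2"
  shows "hyp_dist (ball 0 R) 0 z \<le> 4 * norm z / R"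
proof -
  have "homeomorphism (ball 0 1) (ball 0 R) (\<lambda>w::complex. w * of_real R) (\<lambda>w. w / of_real R)"
  proof (rule homeomorphismI)
    show "continuous_on (ball 0 1) (\<lambda>w::complex. w * of_real R)"
      by (intro continuous_on_mult_right continuous_on_id)
    show "continuous_on (ball 0 R) (\<lambda>w::complex. w / of_real R)"
      using assms(1) by (intro continuous_intros) auto
  qed (use assms(1) in \<open>auto simp: norm_mult norm_divide divide_less_eq\<close>)
  then have cov: "covering_space (ball 0 1) (\<lambda>w::complex. w * of_real R) (ball 0 R)"
    by (rule homeomorphism_imp_covering_space)
  have "norm (z / of_real R) \<le> 1/2" using assms by (simp add: norm_divide divide_le_eq)
  then have "hyp_dist (ball 0 R) (0 * of_real R) (z / of_real R * of_real R)
      \<le> disk_hyp_dist 0 (z / of_real R)"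
    by (intro hyp_dist_le_disk_hyp_dist[OF _ cov]) (auto intro!: holomorphic_intros)
  also have "\<dots> = 2 * artanh (norm z / R)"
    using assms(1) by (simp add: disk_hyp_dist_def norm_divide)
  also have "\<dots> \<le> 2 * (2 * (norm z / R))"
    using assms by (intro mult_left_mono artanh_le_two_mult) (auto simp: divide_le_eq)
  finally show ?thesis using assms(1) by simp
qed

lemma disk_hyp_dist_cayley_shift_le:
  fixes t :: real and \<mu> :: complex
  assumes "t < 0" "norm \<mu> \<le> - t / 2"
  shows "disk_hyp_dist (cayley (of_real t)) (cayley (of_real t + \<mu>)) \<le> 4 * norm \<mu> / (- t)"
proof -
  have "Re \<mu> \<le> norm \<mu>" by (rule complex_Re_le_cmod)
  then have Re: "Re (of_real t + \<mu>) < 0" using assms by simp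
  have "norm (of_real (2 * t) :: complex) - norm \<mu> \<le> norm (of_real (2 * t) + \<mu>)"
    by (rule norm_diff_ineq)
  then have "- t \<le> norm (of_real (2 * t) + \<mu>)" using assms by simp
  then have x: "norm \<mu> / norm (of_real (2 * t) + \<mu>) \<le> norm \<mu> / (- t)"
    using assms(1) by (intro divide_left_mono) (auto simp: mult_less_0_iff)
  have "cnj (of_real t) + (of_real t + \<mu>) = of_real (2 * t) + \<mu>" by simp
  then have "disk_hyp_dist (cayley (of_real t)) (cayley (of_real t + \<mu>))
      = 2 * artanh (norm \<mu> / norm (of_real (2 * t) + \<mu>))"
    using assms(1) Re by (simp add: disk_hyp_dist_cayley)
  also have "\<dots> \<le> 2 * (2 * (norm \<mu> / norm (of_real (2 * t) + \<mu>)))"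
  proof -
    have "norm \<mu> / (- t) \<le> (- t / 2) / (- t)" using assms by (intro divide_right_mono) auto
    also have "\<dots> = 1/2" using assms by simp
    finally have "norm \<mu> / (- t) \<le> 1/2" .
    with x have "norm \<mu> / norm (of_real (2 * t) + \<mu>) \<le> 1/2" by linarith
    then show ?thesis by (intro mult_left_mono artanh_le_two_mult) auto
  qed
  also have "\<dots> \<le> 2 * (2 * (norm \<mu> / (- t)))"
    using x by simp
  finally show ?thesis by simp
qed

lemma norm_Ln_disk_flip_div_le:
  fixes c :: real and u :: complex
  assumes "0 < c" "c < 1" "norm u \<le> c / 8"
  shows "norm (Ln (disk_flip c u / of_real c)) \<le> 4 * norm u * (1 - c\<^sup>2) / c"
proof -
  have den: "1 - of_real c * u \<noteq> 0"
    using disk_flip_denominator_nonzero assms by simp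
  have "disk_flip c u / of_real c - 1 = - u * (1 - (of_real c)\<^sup>2) / (of_real c * (1 - of_real c * u))"
    using den assms(1) by (simp add: disk_flip_def field_simps power2_eq_square)
  moreover have "norm (1 - (of_real c)\<^sup>2 :: complex) = 1 - c\<^sup>2"
  proof -
    have "0 \<le> 1 - c\<^sup>2" using assms by (simp add: power_le_one)
    moreover have "(1 - (of_real c)\<^sup>2 :: complex) = of_real (1 - c\<^sup>2)" by simp
    ultimately show ?thesis by (simp only: norm_of_real abs_of_nonneg)
  qed
  ultimately have eq: "norm (disk_flip c u / of_real c - 1) = norm u * (1 - c\<^sup>2) / (c * norm (1 - of_real c * u))"
    using assms(1) by (simp only: norm_divide norm_mult norm_minus_cancel norm_of_real)
  have "c * norm u \<le> norm u" using assms by (simp add: mult_left_le_one_le)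
  then have "norm (of_real c * u) \<le> 1/2"
    using assms by (simp add: norm_mult)
  then have "1/2 \<le> norm (1 - of_real c * u)"
    using norm_triangle_ineq2[of 1 "of_real c * u"] by simp
  then have "norm (disk_flip c u / of_real c - 1) \<le> norm u * (1 - c\<^sup>2) / (c * (1/2))"
    unfolding eq using assms den
    by (intro divide_left_mono mult_nonneg_nonneg) (auto simp: power_le_one zero_less_mult_iff)
  also have "\<dots> = 2 * norm u * (1 - c\<^sup>2) / c" by simp
  finally have q: "norm (disk_flip c u / of_real c - 1) \<le> 2 * norm u * (1 - c\<^sup>2) / c" .
  also have "\<dots> \<le> 2 * norm u / c"
    using assms by (intro divide_right_mono) (auto simp: mult_left_le)
  also have "\<dots> < 1/2"
    using assms by (simp add: divide_less_eq)
  finally have "norm (Ln (1 + (disk_flip c u / of_real c - 1))) \<le> 2 * norm (disk_flip c u / of_real c - 1)"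
    by (rule norm_Ln_le)
  then show ?thesis using q by simp
qed

lemma hyp_dist_punctured_ball_le_norm_Ln:
  fixes R r :: real and u :: complex
  defines "c \<equiv> r / R"
  defines "\<mu> \<equiv> Ln (disk_flip c u / of_real c)"
  assumes "0 < r" "r < R" "norm u < c" "norm \<mu> \<le> ln (R / r) / 2"
  shows "hyp_dist (ball 0 R - {of_real r}) 0 (of_real R * u) \<le> 4 * norm \<mu> / ln (R / r)"
proof -
  define l where "l = ln (R / r)"
  have c: "0 < c" "c < 1" using assms by (auto simp: c_def)
  have l: "0 < l" "ln c = - l" using assms by (auto simp: c_def l_def ln_div)
  have Re: "Re (of_real (ln c)) < 0" "Re (of_real (ln c) + \<mu>) < 0"
    using l assms(6) complex_Re_le_cmod[of \<mu>] by (auto simp: l_def)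
  then have ne1: "of_real (ln c) \<noteq> (1::complex)" "of_real (ln c) + \<mu> \<noteq> 1"
    by (auto simp: complex_eq_iff)
  have "u \<noteq> of_real c" using assms(5) by auto
  then have "disk_flip c u \<noteq> 0" using disk_flip_eq_0_iff[of c u] c assms(5) by simp
  then have "exp (of_real (ln c) + \<mu>) = disk_flip c u"
    using c by (simp add: \<mu>_def exp_add exp_of_real)
  then have lift_u: "punctured_ball_covering R r (cayley (of_real (ln c) + \<mu>)) = of_real R * u"
    using ne1 disk_flip_disk_flip[of c u] c assms(5)
    by (simp add: punctured_ball_covering_cayley flip: c_def)
  have lift_0: "punctured_ball_covering R r (cayley (of_real (ln c))) = 0"
    using ne1 c by (simp add: punctured_ball_covering_cayley exp_of_real flip: c_def)
  have "hyp_dist (ball 0 R - {of_real r}) 0 (of_real R * u)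
      \<le> disk_hyp_dist (cayley (of_real (ln c))) (cayley (of_real (ln c) + \<mu>))"
    using hyp_dist_le_disk_hyp_dist[OF holomorphic_on_punctured_ball_covering[OF assms(3,4)]
        covering_space_punctured_ball_covering[OF assms(3,4)]] norm_cayley_less_1 Re
    by (metis lift_0 lift_u mem_ball_0)
  also have "\<dots> \<le> 4 * norm \<mu> / l"
    using disk_hyp_dist_cayley_shift_le[of "ln c" \<mu>] l assms(6) by (simp add: l_def)
  finally show ?thesis by (simp add: l_def)
qed

lemma hyp_dist_punctured_ball_le:
  fixes R r :: real and z :: complex
  assumes "0 < r" "r < R" "norm z \<le> r / 16"
  shows "hyp_dist (ball 0 R - {of_real r}) 0 z \<le> 16 * (norm z / r) * (1 - (r / R)\<^sup>2) / ln (R / r)"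
proof -
  define c where "c = r / R"
  define l where "l = ln (R / r)"
  define u where "u = z / of_real R"
  define \<mu> where "\<mu> = Ln (disk_flip c u / of_real c)"
  have c: "0 < c" "c < 1" and R: "0 < R" using assms by (auto simp: c_def)
  have l: "0 < l" "ln c = - l" using assms by (auto simp: c_def l_def ln_div)
  have zr: "0 \<le> norm z / r" "norm z / r \<le> 1/16" using assms by (auto simp: divide_le_eq)
  have nu: "norm u = c * (norm z / r)" using assms by (simp add: u_def c_def norm_divide)
  moreover have "c * (norm z / r) \<le> c * (1/16)" using c zr by (intro mult_left_mono) auto
  ultimately have "norm u \<le> c / 16" by simp
  then have "norm \<mu> \<le> 4 * norm u * (1 - c\<^sup>2) / c"
    using c unfolding \<mu>_def by (intro norm_Ln_disk_flip_div_le) simp_all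
  then have mu: "norm \<mu> \<le> 4 * (norm z / r) * (1 - c\<^sup>2)"
    using c by (simp add: nu)
  have "1 - c\<^sup>2 \<le> 2 * l" using one_minus_square_le_minus_two_ln[OF c(1)] l by simp
  with mu zr have "norm \<mu> \<le> 4 * (norm z / r) * (2 * l)"
    by (meson mult_left_mono order_trans zero_le_numeral zero_le_mult_iff)
  also have "\<dots> \<le> 4 * (1/16) * (2 * l)"
    using zr l by (intro mult_right_mono mult_left_mono) auto
  finally have "norm \<mu> \<le> l / 2" by simp
  moreover have "norm u < c" using \<open>norm u \<le> c / 16\<close> c by simp
  ultimately have "hyp_dist (ball 0 R - {of_real r}) 0 (of_real R * u) \<le> 4 * norm \<mu> / l"
    using hyp_dist_punctured_ball_le_norm_Ln[of r R u] assms by (simp add: c_def l_def \<mu>_def)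
  also have "\<dots> \<le> 4 * (4 * (norm z / r) * (1 - c\<^sup>2)) / l"
    using mu l by (intro divide_right_mono mult_left_mono) auto
  finally show ?thesis using R by (simp add: c_def l_def u_def)
qed

definition punctured_ball_const :: "real \<Rightarrow> real" where
  "punctured_ball_const r0 = 16 * (3 - 2 * ln r0) / r0"

lemma punctured_ball_const_ge:
  fixes r0 :: real
  assumes "0 < r0" "r0 < 1"
  shows "16 \<le> punctured_ball_const r0" "1 / r0 \<le> punctured_ball_const r0"
proof -
  have "1 \<le> 3 - 2 * ln r0" using ln_less_zero[OF assms] by linarith
  then have "16 / r0 \<le> punctured_ball_const r0"
    unfolding punctured_ball_const_def using assms by (intro divide_right_mono) auto
  moreover have "16 \<le> 16 / r0" "1 / r0 \<le> 16 / r0"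
    using assms by (simp_all add: le_divide_eq divide_right_mono)
  ultimately show "16 \<le> punctured_ball_const r0" "1 / r0 \<le> punctured_ball_const r0"
    by linarith+
qed

lemma hyp_dist_ball_minus_point_le:
  fixes r0 r :: real and z :: complex
  assumes "0 < r0" "r0 < 1" "0 < r" "r \<le> 1" "norm z \<le> r / 16" "norm z \<le> r0 / 2"
  shows "hyp_dist (ball 0 r0 - {of_real r}) 0 z
           \<le> punctured_ball_const r0 * norm z / (r * ln (exp 1 / r))"
proof -
  define K where "K = 3 - 2 * ln r0"
  define Lr where "Lr = ln (exp 1 / r)"
  have K: "3 \<le> K" using assms by (simp add: K_def)
  have Lr: "1 \<le> Lr" "r * Lr \<le> 1"
    using assms ln_exp1_div_ge_1[of r] mult_ln_exp1_div_le_1[of r] by (auto simp: Lr_def)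
  have "hyp_dist (ball 0 r0 - {of_real r}) 0 z \<le> 16 * K * norm z / (r0 * (r * Lr))"
  proof (cases "r0 \<le> r")
    case True
    then have "ball 0 r0 - {of_real r} = (ball 0 r0 :: complex set)" by (auto simp: dist_norm)
    then have "hyp_dist (ball 0 r0 - {of_real r}) 0 z \<le> 4 * norm z / r0"
      using hyp_dist_ball_0_le assms by simp
    also have "\<dots> = 4 * (r * Lr) * norm z / (r0 * (r * Lr))" using assms Lr by simp
    also have "\<dots> \<le> 16 * K * norm z / (r0 * (r * Lr))"
    proof -
      have "4 * (r * Lr) \<le> 16 * K" using Lr K by linarith
      then show ?thesis using assms Lr by (intro divide_right_mono mult_right_mono) auto
    qed
    finally show ?thesis .
  next
    case False
    have "hyp_dist (ball 0 r0 - {of_real r}) 0 z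
        \<le> 16 * (norm z / r) * ((1 - (r / r0)\<^sup>2) / ln (r0 / r))"
      using hyp_dist_punctured_ball_le False assms by simp
    also have "\<dots> \<le> 16 * (norm z / r) * (K / Lr)"
      using one_minus_square_div_ln_le[of r r0] False assms
      by (intro mult_left_mono) (auto simp: K_def Lr_def)
    also have "\<dots> = 16 * K * norm z / (r * Lr)" by simp
    also have "\<dots> \<le> 16 * K * norm z / (r0 * (r * Lr))"
      using Lr K assms by (intro divide_left_mono) (auto intro: mult_left_le_one_le)
    finally show ?thesis .
  qed
  then show ?thesis by (simp add: punctured_ball_const_def K_def Lr_def)
qed

lemma hyp_dist_ball_minus_point_le_log_ratio:
  fixes r0 \<delta> \<alpha> r :: real and z :: complex
  defines "C \<equiv> punctured_ball_const r0"
  assumes r0: "0 < r0" "r0 < 1" and \<delta>: "0 < \<delta>" "\<delta> \<le> 1" and r: "0 < \<alpha>" "\<alpha> < r" "r \<le> 1"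
    and z: "norm z \<le> \<delta> * (r * ln (exp 1 / r)) / (2 * C * ln (exp 1 / \<alpha>))"
  shows "hyp_dist (ball 0 r0 - {of_real r}) 0 z \<le> \<delta> / (2 * ln (exp 1 / \<alpha>))"
proof -
  define L where "L = ln (exp 1 / \<alpha>)"
  define \<rho> where "\<rho> = r * ln (exp 1 / r)"
  have C: "16 \<le> C" "1 / r0 \<le> C" using punctured_ball_const_ge[OF r0] by (simp_all add: C_def)
  have \<rho>: "0 < \<rho>" "\<rho> \<le> 1"
    using r mult_ln_exp1_div_pos[of r] mult_ln_exp1_div_le_1[of r] by (auto simp: \<rho>_def)
  have L: "ln (exp 1 / r) \<le> L" "1 \<le> L"
    using r ln_exp1_div_ge_1[of r] by (auto simp: L_def ln_div)
  have z: "norm z \<le> \<delta> * \<rho> / (2 * C * L)" using z by (simp add: L_def \<rho>_def)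
  have \<delta>\<rho>: "\<delta> * \<rho> \<le> \<rho>" using \<delta> \<rho> by (simp add: mult_left_le_one_le)
  have "\<rho> \<le> r * L" using r L by (simp add: \<rho>_def mult_left_mono)
  with \<delta>\<rho> have "\<delta> * \<rho> \<le> r * L" by linarith
  then have "norm z \<le> r * L / (2 * C * L)"
    using C L by (intro order_trans[OF z] divide_right_mono) auto
  also have "\<dots> = r / (2 * C)" using L by simp
  also have "\<dots> \<le> r / 16" using C r by (intro divide_left_mono) auto
  finally have z16: "norm z \<le> r / 16" .
  have "\<delta> * \<rho> \<le> L" using \<delta>\<rho> \<rho> L by linarith
  then have "norm z \<le> L / (2 * C * L)"
    using C L by (intro order_trans[OF z] divide_right_mono) auto
  also have "\<dots> = 1 / (2 * C)" using L by simp
  also have "\<dots> \<le> r0 / 2" using C r0 by (simp add: divide_le_eq mult.commute)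
  finally have "norm z \<le> r0 / 2" .
  then have "hyp_dist (ball 0 r0 - {of_real r}) 0 z \<le> C * norm z / \<rho>"
    using hyp_dist_ball_minus_point_le[of r0 r z] r0 r z16 by (simp add: C_def \<rho>_def)
  also have "\<dots> \<le> C * (\<delta> * \<rho> / (2 * C * L)) / \<rho>"
    using z C \<rho> by (intro divide_right_mono mult_left_mono) auto
  also have "\<dots> = \<delta> / (2 * L)" using C \<rho> by simp
  finally show ?thesis by (simp add: L_def)
qed

theorem lemma7:
  fixes r0 :: real
  assumes "0 < r0" and "r0 < 1"
  shows "\<exists>\<gamma>>0. \<forall>\<delta> \<alpha> r (z::complex).
           0 < \<delta> \<and> \<delta> < 1/10 \<and> 0 < \<alpha> \<and> \<alpha> < r \<and> r \<le> 1 \<and>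
           cmod z \<le> \<gamma> * \<delta> * r * ln (exp 1 / r) / ln (exp 1 / \<alpha>) \<longrightarrow>
           hyp_dist (ball 0 r0 - {complex_of_real r}) 0 z \<le> \<delta> / (2 * ln (exp 1 / \<alpha>))"
proof -
  define C where "C = punctured_ball_const r0"
  have C: "16 \<le> C" using punctured_ball_const_ge[OF assms] by (simp add: C_def)
  show ?thesis
  proof (intro exI[of _ "1 / (2 * C)"] conjI allI impI)
    show "0 < 1 / (2 * C)" using C by simp
    fix \<delta> \<alpha> r :: real and z :: complex
    assume "0 < \<delta> \<and> \<delta> < 1/10 \<and> 0 < \<alpha> \<and> \<alpha> < r \<and> r \<le> 1 \<and>
      cmod z \<le> 1 / (2 * C) * \<delta> * r * ln (exp 1 / r) / ln (exp 1 / \<alpha>)"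
    then show "hyp_dist (ball 0 r0 - {complex_of_real r}) 0 z \<le> \<delta> / (2 * ln (exp 1 / \<alpha>))"
      using hyp_dist_ball_minus_point_le_log_ratio[of r0 \<delta> \<alpha> r z] assms
      by (simp add: C_def mult_ac)
  qed
qed

end
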